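(* Let $\mathds{k}$ be an algebraically closed field of characteristic $p>0$, $G$ a finite group, $\omega$ a 3-cocycle on $G$ with values in $\mathds{k}^\times$, $H\subseteq G$ a subgroup and $\phi:H\times H\to\mathds{k}^\times$ a 2-cochain with $d\phi=\omega|_H^{-1}$. Then the finite semisimple right $\mathbf{Vect}^\omega_G$-module category $\mathcal{M}(H,\phi)$ is separable if and only if $H$ has no $p$-torsion.
   Context: $\mathbf{Vect}^{\omega}_G$ is the fusion category of finite-dimensional $G$-graded $\mathds{k}$-vector spaces with simple objects $\mathds{k}_g$, $\mathds{k}_g\otimes\mathds{k}_h=\mathds{k}_{gh}$, and associator $(\mathds{k}_g\otimes \mathds{k}_h)\otimes \mathds{k}_m\rightarrow \mathds{k}_g\otimes (\mathds{k}_h\otimes \mathds{k}_m)$ given by $\omega(g,h,m)$. For a 2-cochain $\kappa$, $(d\kappa)(a,b,c)=\kappa(b,c)\kappa(ab,c)^{-1}\kappa(a,bc)\kappa(a,b)^{-1}$. $R(H,\phi)$ is the algebra in $\mathbf{Vect}^\omega_G$ given by the twisted group algebra $\mathds{k}^\phi[H]$ (object $\bigoplus_{h\in H}\mathds{k}_h$, product $h_1\cdot h_2=\phi(h_1,h_2)h_1h_2$), and $\mathcal{M}(H,\phi)$ is the right $\mathbf{Vect}^\omega_G$-module category of left $R(H,\phi)$-modules in $\mathbf{Vect}^\omega_G$. A finite semisimple right module category $\mathcal{M}$ over a fusion category $\mathcal{C}$ is separable if $\mathcal{M}\simeq Mod_{\mathcal{C}}(R)$ for a separable algebra $R$ in $\mathcal{C}$,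 i.e. one whose multiplication $R\otimes R\to R$ admits a section as a map of $R$-$R$-bimodules (this does not depend on the choice of $R$). *)

theory Defs
  imports "HOL-Algebra.Group" "HOL-Computational_Algebra.Polynomial"
begin

definition is_3cocycle :: "('g,'b) monoid_scheme \<Rightarrow> ('g \<Rightarrow> 'g \<Rightarrow> 'g \<Rightarrow> 'k::field) \<Rightarrow> bool" where
  "is_3cocycle G \<omega> \<longleftrightarrow>
     (\<forall>a\<in>carrier G. \<forall>b\<in>carrier G. \<forall>c\<in>carrier G. \<omega> a b c \<noteq> 0) \<and>
     (\<forall>a\<in>carrier G. \<forall>b\<in>carrier G. \<forall>c\<in>carrier G. \<forall>e\<in>carrier G.
        \<omega> b c e * inverse (\<omega> (a \<otimes>\<^bsub>G\<^esub> b) c e) * \<omega> a (b \<otimes>\<^bsub>G\<^esub> c) e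
        * inverse (\<omega> a b (c \<otimes>\<^bsub>G\<^esub> e)) * \<omega> a b c = 1)"

definition cobound2 :: "('g,'b) monoid_scheme \<Rightarrow> ('g \<Rightarrow> 'g \<Rightarrow> 'k::field) \<Rightarrow> 'g \<Rightarrow> 'g \<Rightarrow> 'g \<Rightarrow> 'k" where
  "cobound2 G \<kappa> a b c =
     \<kappa> b c * inverse (\<kappa> (a \<otimes>\<^bsub>G\<^esub> b) c) * \<kappa> a (b \<otimes>\<^bsub>G\<^esub> c) * inverse (\<kappa> a b)"

text \<open>Objects built from R = (+)_{h in H} k_h are described by their homogeneous bases:
  R has basis H (h of degree h), R (x) R has basis H x H ((a,b) of degree ab),
  R (x) (R (x) R) has basis H x (H x H), (R (x) R) (x) R has basis (H x H) x H.
  A morphism is given by its matrix of coefficients.  The associator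
  (k_a (x) k_b) (x) k_c -> k_a (x) (k_b (x) k_c) is multiplication by omega(a,b,c).\<close>

text \<open>Multiplication mu : R (x) R -> R, a (x) b |-> phi(a,b) ab; coefficient of c in mu(a (x) b).\<close>
definition tw_mult :: "('g,'b) monoid_scheme \<Rightarrow> ('g \<Rightarrow> 'g \<Rightarrow> 'k::field) \<Rightarrow> 'g \<times> 'g \<Rightarrow> 'g \<Rightarrow> 'k" where
  "tw_mult G \<phi> ab c = (if c = fst ab \<otimes>\<^bsub>G\<^esub> snd ab then \<phi> (fst ab) (snd ab) else 0)"

text \<open>Left R-action on R (x) R: (mu (x) id) o alpha^-1 : R (x) (R (x) R) -> R (x) R.\<close>
definition tw_left_act :: "('g,'b) monoid_scheme \<Rightarrow> ('g \<Rightarrow> 'g \<Rightarrow> 'g \<Rightarrow> 'k::field) \<Rightarrow> ('g \<Rightarrow> 'g \<Rightarrow> 'k)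
    \<Rightarrow> 'g \<times> ('g \<times> 'g) \<Rightarrow> 'g \<times> 'g \<Rightarrow> 'k" where
  "tw_left_act G \<omega> \<phi> gab xy =
     (let g = fst gab; a = fst (snd gab); b = snd (snd gab) in
      if xy = (g \<otimes>\<^bsub>G\<^esub> a, b) then inverse (\<omega> g a b) * \<phi> g a else 0)"

text \<open>Right R-action on R (x) R: (id (x) mu) o alpha : (R (x) R) (x) R -> R (x) R.\<close>
definition tw_right_act :: "('g,'b) monoid_scheme \<Rightarrow> ('g \<Rightarrow> 'g \<Rightarrow> 'g \<Rightarrow> 'k::field) \<Rightarrow> ('g \<Rightarrow> 'g \<Rightarrow> 'k)
    \<Rightarrow> ('g \<times> 'g) \<times> 'g \<Rightarrow> 'g \<times> 'g \<Rightarrow> 'k" where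
  "tw_right_act G \<omega> \<phi> abg xy =
     (let a = fst (fst abg); b = snd (fst abg); g = snd abg in
      if xy = (a, b \<otimes>\<^bsub>G\<^esub> g) then \<omega> a b g * \<phi> b g else 0)"

text \<open>R(H,phi) is a separable algebra in Vect^omega_G: the multiplication R (x) R -> R admits
  a section s : R -> R (x) R (a morphism in Vect^omega_G, i.e. degree preserving) which is
  a map of R-R-bimodules.  s h (a,b) is the coefficient of a (x) b in s(h).\<close>
definition twisted_group_alg_separable ::
    "('g,'b) monoid_scheme \<Rightarrow> ('g \<Rightarrow> 'g \<Rightarrow> 'g \<Rightarrow> 'k::field) \<Rightarrow> 'g set \<Rightarrow> ('g \<Rightarrow> 'g \<Rightarrow> 'k) \<Rightarrow> bool" where
  "twisted_group_alg_separable G \<omega> H \<phi> \<longleftrightarrow>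
    (\<exists>s :: 'g \<Rightarrow> 'g \<times> 'g \<Rightarrow> 'k.
       \<comment> \<open>s is a morphism of G-graded vector spaces\<close>
       (\<forall>h\<in>H. \<forall>a\<in>H. \<forall>b\<in>H. s h (a, b) \<noteq> 0 \<longrightarrow> a \<otimes>\<^bsub>G\<^esub> b = h) \<and>
       \<comment> \<open>mu o s = id_R\<close>
       (\<forall>h\<in>H. \<forall>h'\<in>H. (\<Sum>ab\<in>H \<times> H. s h ab * tw_mult G \<phi> ab h') = (if h' = h then 1 else 0)) \<and>
       \<comment> \<open>left R-linearity: s o mu = lambda o (id (x) s)\<close>
       (\<forall>g\<in>H. \<forall>h\<in>H. \<forall>xy\<in>H \<times> H.
          (\<Sum>c\<in>H. tw_mult G \<phi> (g, h) c * s c xy)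
          = (\<Sum>ab\<in>H \<times> H. s h ab * tw_left_act G \<omega> \<phi> (g, ab) xy)) \<and>
       \<comment> \<open>right R-linearity: s o mu = rho o (s (x) id)\<close>
       (\<forall>h\<in>H. \<forall>g\<in>H. \<forall>xy\<in>H \<times> H.
          (\<Sum>c\<in>H. tw_mult G \<phi> (h, g) c * s c xy)
          = (\<Sum>ab\<in>H \<times> H. s h ab * tw_right_act G \<omega> \<phi> (ab, g) xy)))"

text \<open>M(H,phi) = Mod(R(H,phi)) is separable iff R(H,phi) is separable (independence of R).\<close>
definition module_cat_M_separable ::
    "('g,'b) monoid_scheme \<Rightarrow> ('g \<Rightarrow> 'g \<Rightarrow> 'g \<Rightarrow> 'k::field) \<Rightarrow> 'g set \<Rightarrow> ('g \<Rightarrow> 'g \<Rightarrow> 'k) \<Rightarrow> bool" where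
  "module_cat_M_separable G \<omega> H \<phi> \<longleftrightarrow> twisted_group_alg_separable G \<omega> H \<phi>"

definition has_no_p_torsion :: "('g,'b) monoid_scheme \<Rightarrow> 'g set \<Rightarrow> nat \<Rightarrow> bool" where
  "has_no_p_torsion G H p \<longleftrightarrow> (\<forall>h\<in>H. h [^]\<^bsub>G\<^esub> p = \<one>\<^bsub>G\<^esub> \<longrightarrow> h = \<one>\<^bsub>G\<^esub>)"

end

theory Submission
  imports Defs "HOL-Algebra.Sylow" "HOL-Algebra.Multiplicative_Group"
begin

text \<open>
  A bimodule section s of the multiplication of R(H,\<phi>) is determined by the scalars
  u(a,b) = \<phi>(a,b) * (coefficient of a \<otimes> b in s(ab)). Given d\<phi> = \<omega>\<inverse>, left and right
  R-linearity of s say precisely that u(ga,b) = u(a,b) = u(a,bg), so u is a constant c, and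
  \<mu> \<circ> s = id becomes |H| c = 1; conversely c = 1/|H| defines such a section. So R(H,\<phi>) is
  separable iff p does not divide |H|, which by Cauchy's and Lagrange's theorems means that
  H has no p-torsion.
\<close>

lemma (in group) prime_dvd_order_iff_elem_of_order:
  assumes "finite (carrier G)" and "prime p"
  shows "p dvd order G \<longleftrightarrow> (\<exists>x\<in>carrier G. x \<noteq> \<one> \<and> x [^] p = \<one>)"
proof
  assume "p dvd order G"
  then obtain m where "order G = p ^ 1 * m" by auto
  then obtain P where P: "subgroup P G" "card P = p"
    using sylow_thm[of p G 1 m] assms is_group by auto
  interpret P: group "G\<lparr>carrier := P\<rparr>" by (rule subgroup_imp_group[OF P(1)])
  have "P \<noteq> {\<one>}" using P(2) assms(2) by (auto simp: prime_nat_iff)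
  then obtain x where x: "x \<in> P" "x \<noteq> \<one>" using subgroup.one_closed[OF P(1)] by blast
  have "x [^] p = \<one>"
    using P.pow_order_eq_1[of x] x(1) P(2) by (simp add: order_def flip: nat_pow_consistent)
  then show "\<exists>x\<in>carrier G. x \<noteq> \<one> \<and> x [^] p = \<one>"
    using x subgroup.mem_carrier[OF P(1)] by blast
next
  assume "\<exists>x\<in>carrier G. x \<noteq> \<one> \<and> x [^] p = \<one>"
  then obtain x where x: "x \<in> carrier G" "x \<noteq> \<one>" "x [^] p = \<one>" by blast
  have "ord x = p"
    using x assms(2) pow_eq_id[of x p] ord_eq_1[of x] by (auto simp: prime_nat_iff)
  then show "p dvd order G" using ord_dvd_group_order[OF x(1)] by simp
qed

lemma (in group) prime_dvd_card_subgroup_iff_elem_of_order: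
  assumes "subgroup H G" and "finite H" and "prime p"
  shows "p dvd card H \<longleftrightarrow> (\<exists>x\<in>H. x \<noteq> \<one> \<and> x [^] p = \<one>)"
proof -
  interpret H: group "G\<lparr>carrier := H\<rparr>" by (rule subgroup_imp_group[OF assms(1)])
  show ?thesis
    using H.prime_dvd_order_iff_elem_of_order[of p] assms(2,3) by (simp add: order_def flip: nat_pow_consistent)
qed

lemma (in group) no_p_torsion_iff_not_dvd_card:
  assumes "subgroup H G" and "finite H" and "prime p"
  shows "has_no_p_torsion G H p \<longleftrightarrow> \<not> p dvd card H"
  using prime_dvd_card_subgroup_iff_elem_of_order[OF assms] unfolding has_no_p_torsion_def by blast

locale twisted_group_algebra = group G for G :: "('a, 'b) monoid_scheme" (structure) +
  fixes H :: "'a set" and \<omega> :: "'a \<Rightarrow> 'a \<Rightarrow> 'a \<Rightarrow> 'k::field" and \<phi> :: "'a \<Rightarrow> 'a \<Rightarrow> 'k"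
  assumes subgroup_H: "subgroup H G"
    and finite_H: "finite H"
    and twist_nonzero: "\<lbrakk>a \<in> H; b \<in> H\<rbrakk> \<Longrightarrow> \<phi> a b \<noteq> 0"
    and cobound2_twist: "\<lbrakk>a \<in> H; b \<in> H; c \<in> H\<rbrakk> \<Longrightarrow> cobound2 G \<phi> a b c = inverse (\<omega> a b c)"
begin

lemma H_carrier: "x \<in> H \<Longrightarrow> x \<in> carrier G"
  using subgroup.mem_carrier[OF subgroup_H] .

lemma H_closed:
  "\<lbrakk>x \<in> H; y \<in> H\<rbrakk> \<Longrightarrow> x \<otimes> y \<in> H"
  "x \<in> H \<Longrightarrow> inv x \<in> H"
  by (simp_all add: subgroup.m_closed[OF subgroup_H] subgroup.m_inv_closed[OF subgroup_H])

lemma omega_nonzero: "\<lbrakk>a \<in> H; b \<in> H; c \<in> H\<rbrakk> \<Longrightarrow> \<omega> a b c \<noteq> 0"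
  using cobound2_twist[of a b c] twist_nonzero H_closed by (force simp: cobound2_def)

lemma twist_coboundary_relation:
  assumes "a \<in> H" "b \<in> H" "c \<in> H"
  shows "\<phi> b c * \<phi> a (b \<otimes> c) = inverse (\<omega> a b c) * \<phi> a b * \<phi> (a \<otimes> b) c"
  using cobound2_twist[OF assms] twist_nonzero assms H_closed
  by (auto simp: cobound2_def field_simps)

lemma sum_tw_mult:
  assumes "g \<in> H" "h \<in> H"
  shows "(\<Sum>c\<in>H. tw_mult G \<phi> (g, h) c * f c) = \<phi> g h * f (g \<otimes> h)"
proof -
  have "tw_mult G \<phi> (g, h) c * f c = (if c = g \<otimes> h then \<phi> g h * f c else 0)" for c
    by (simp add: tw_mult_def)
  then show ?thesis
    using assms finite_H by (simp add: sum.delta' H_closed)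
qed

lemma sum_pairs_tw_mult:
  assumes "h \<in> H"
  shows "(\<Sum>ab\<in>H \<times> H. t ab * tw_mult G \<phi> ab h) = (\<Sum>a\<in>H. t (a, inv a \<otimes> h) * \<phi> a (inv a \<otimes> h))"
proof -
  have "t (a, b) * tw_mult G \<phi> (a, b) h = (if b = inv a \<otimes> h then t (a, b) * \<phi> a b else 0)"
    if "a \<in> H" "b \<in> H" for a b
    using that assms H_carrier inv_solve_left by (auto simp: tw_mult_def)
  then have "(\<Sum>b\<in>H. t (a, b) * tw_mult G \<phi> (a, b) h) = t (a, inv a \<otimes> h) * \<phi> a (inv a \<otimes> h)"
    if "a \<in> H" for a
    using that assms finite_H by (simp add: sum.delta' H_closed)
  moreover have "(\<Sum>ab\<in>H \<times> H. t ab * tw_mult G \<phi> ab h) = (\<Sum>a\<in>H. \<Sum>b\<in>H. t (a, b) * tw_mult G \<phi> (a, b) h)"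
    unfolding sum.cartesian_product by simp
  ultimately show ?thesis
    by simp
qed

lemma sum_tw_left_act:
  assumes "g \<in> H" "a \<in> H" "y \<in> H"
  shows "(\<Sum>ab\<in>H \<times> H. t ab * tw_left_act G \<omega> \<phi> (g, ab) (g \<otimes> a, y))
       = t (a, y) * (inverse (\<omega> g a y) * \<phi> g a)"
proof -
  have "((g \<otimes> a, y) = (g \<otimes> fst ab, snd ab)) \<longleftrightarrow> (ab = (a, y))" if "ab \<in> H \<times> H" for ab
    using that assms H_carrier by (cases ab) auto
  then show ?thesis
    using finite_H assms
    by (auto simp: tw_left_act_def Let_def if_distrib sum.delta' cong: sum.cong if_cong)
qed

lemma sum_tw_right_act:
  assumes "x \<in> H" "b \<in> H" "g \<in> H"
  shows "(\<Sum>ab\<in>H \<times> H. t ab * tw_right_act G \<omega> \<phi> (ab, g) (x, b \<otimes> g))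
       = t (x, b) * (\<omega> x b g * \<phi> b g)"
proof -
  have "((x, b \<otimes> g) = (fst ab, snd ab \<otimes> g)) \<longleftrightarrow> (ab = (x, b))" if "ab \<in> H \<times> H" for ab
    using that assms H_carrier by (cases ab) auto
  then show ?thesis
    using finite_H assms
    by (auto simp: tw_right_act_def Let_def if_distrib sum.delta' cong: sum.cong if_cong)
qed

lemma separable_if_card_nonzero:
  assumes card: "of_nat (card H) \<noteq> (0::'k)"
  shows "twisted_group_alg_separable G \<omega> H \<phi>"
proof -
  define s where "s h ab = (if fst ab \<otimes> snd ab = h
      then inverse (of_nat (card H)) * inverse (\<phi> (fst ab) (snd ab)) else 0)" for h ab
  have unit: "(\<Sum>ab\<in>H \<times> H. s h ab * tw_mult G \<phi> ab h') = (if h' = h then 1 else 0)"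
    if "h \<in> H" "h' \<in> H" for h h'
  proof -
    have "s h (a, inv a \<otimes> h') * \<phi> a (inv a \<otimes> h') = (if h' = h then inverse (of_nat (card H)) else 0)"
      if "a \<in> H" for a
      using that \<open>h' \<in> H\<close> twist_nonzero[of a "inv a \<otimes> h'"] H_carrier
      by (auto simp: s_def m_assoc[symmetric] H_closed)
    then show ?thesis
      using that card by (simp add: sum_pairs_tw_mult)
  qed
  have left: "(\<Sum>c\<in>H. tw_mult G \<phi> (g, h) c * s c xy)
      = (\<Sum>ab\<in>H \<times> H. s h ab * tw_left_act G \<omega> \<phi> (g, ab) xy)"
    if "g \<in> H" "h \<in> H" "xy \<in> H \<times> H" for g h xy
  proof -
    obtain a y where xy: "xy = (g \<otimes> a, y)" "a \<in> H" "y \<in> H"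
    proof
      show "xy = (g \<otimes> (inv g \<otimes> fst xy), snd xy)"
        using \<open>g \<in> H\<close> \<open>xy \<in> H \<times> H\<close> H_carrier by (auto simp: m_assoc[symmetric])
    qed (use \<open>g \<in> H\<close> \<open>xy \<in> H \<times> H\<close> H_closed in auto)
    have "\<phi> g h * s (g \<otimes> h) (g \<otimes> a, y) = s h (a, y) * (inverse (\<omega> g a y) * \<phi> g a)"
    proof (cases "h = a \<otimes> y")
      case True
      have "\<phi> g (a \<otimes> y) * inverse (\<phi> (g \<otimes> a) y)
          = inverse (\<phi> a y) * (inverse (\<omega> g a y) * \<phi> g a)"
        using twist_coboundary_relation[of g a y] twist_nonzero[of a y] twist_nonzero[of "g \<otimes> a" y]
          omega_nonzero[of g a y] that xy
        by (simp add: H_closed field_simps)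
      then show ?thesis
        using True that xy H_carrier by (simp add: s_def m_assoc mult.left_commute)
    next
      case False
      then have "(g \<otimes> a) \<otimes> y \<noteq> g \<otimes> h"
        using that xy H_carrier by (simp add: m_assoc)
      then show ?thesis
        using False by (simp add: s_def)
    qed
    then show ?thesis
      using that xy by (simp add: sum_tw_mult sum_tw_left_act)
  qed
  have right: "(\<Sum>c\<in>H. tw_mult G \<phi> (h, g) c * s c xy)
      = (\<Sum>ab\<in>H \<times> H. s h ab * tw_right_act G \<omega> \<phi> (ab, g) xy)"
    if "h \<in> H" "g \<in> H" "xy \<in> H \<times> H" for h g xy
  proof -
    obtain x b where xy: "xy = (x, b \<otimes> g)" "x \<in> H" "b \<in> H"
    proof
      show "xy = (fst xy, (snd xy \<otimes> inv g) \<otimes> g)"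
        using \<open>g \<in> H\<close> \<open>xy \<in> H \<times> H\<close> H_carrier by (auto simp: m_assoc)
    qed (use \<open>g \<in> H\<close> \<open>xy \<in> H \<times> H\<close> H_closed in auto)
    have "\<phi> h g * s (h \<otimes> g) (x, b \<otimes> g) = s h (x, b) * (\<omega> x b g * \<phi> b g)"
    proof (cases "h = x \<otimes> b")
      case True
      have "\<phi> (x \<otimes> b) g * inverse (\<phi> x (b \<otimes> g))
          = inverse (\<phi> x b) * (\<omega> x b g * \<phi> b g)"
        using twist_coboundary_relation[of x b g] twist_nonzero[of x b] twist_nonzero[of x "b \<otimes> g"]
          omega_nonzero[of x b g] that xy
        by (simp add: H_closed field_simps)
      then show ?thesis
        using True that xy H_carrier by (simp add: s_def m_assoc mult.left_commute)
    next
      case False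
      then have "x \<otimes> (b \<otimes> g) \<noteq> h \<otimes> g"
        using that xy H_carrier by (simp add: m_assoc[symmetric])
      then show ?thesis
        using False by (simp add: s_def)
    qed
    then show ?thesis
      using that xy by (simp add: sum_tw_mult sum_tw_right_act)
  qed
  have graded: "s h (a, b) \<noteq> 0 \<Longrightarrow> a \<otimes> b = h" for h a b
    by (simp add: s_def split: if_splits)
  show ?thesis
    unfolding twisted_group_alg_separable_def
    by (intro exI[of _ s] conjI ballI impI graded unit left right)
qed

lemma card_nonzero_if_separable:
  assumes "twisted_group_alg_separable G \<omega> H \<phi>"
  shows "of_nat (card H) \<noteq> (0::'k)"
proof -
  obtain s :: "'a \<Rightarrow> 'a \<times> 'a \<Rightarrow> 'k" where
    unit: "\<And>h h'. \<lbrakk>h \<in> H; h' \<in> H\<rbrakk> \<Longrightarrow>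
      (\<Sum>ab\<in>H \<times> H. s h ab * tw_mult G \<phi> ab h') = (if h' = h then 1 else 0)" and
    left: "\<And>g h xy. \<lbrakk>g \<in> H; h \<in> H; xy \<in> H \<times> H\<rbrakk> \<Longrightarrow>
      (\<Sum>c\<in>H. tw_mult G \<phi> (g, h) c * s c xy)
      = (\<Sum>ab\<in>H \<times> H. s h ab * tw_left_act G \<omega> \<phi> (g, ab) xy)" and
    right: "\<And>h g xy. \<lbrakk>h \<in> H; g \<in> H; xy \<in> H \<times> H\<rbrakk> \<Longrightarrow>
      (\<Sum>c\<in>H. tw_mult G \<phi> (h, g) c * s c xy)
      = (\<Sum>ab\<in>H \<times> H. s h ab * tw_right_act G \<omega> \<phi> (ab, g) xy)"
    using assms unfolding twisted_group_alg_separable_def by blast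
  define u where "u a b = s (a \<otimes> b) (a, b) * \<phi> a b" for a b
  have u_left: "u (g \<otimes> a) y = u a y" if "g \<in> H" "a \<in> H" "y \<in> H" for g a y
  proof -
    have linear: "\<phi> g (a \<otimes> y) * s (g \<otimes> (a \<otimes> y)) (g \<otimes> a, y)
        = s (a \<otimes> y) (a, y) * (inverse (\<omega> g a y) * \<phi> g a)"
      using left[of g "a \<otimes> y" "(g \<otimes> a, y)"] that by (simp add: H_closed sum_tw_mult sum_tw_left_act)
    have "\<phi> g (a \<otimes> y) * u (g \<otimes> a) y
        = \<phi> (g \<otimes> a) y * (\<phi> g (a \<otimes> y) * s (g \<otimes> (a \<otimes> y)) (g \<otimes> a, y))"
      using that H_carrier by (simp add: u_def m_assoc mult_ac)
    also have "\<dots> = s (a \<otimes> y) (a, y) * (inverse (\<omega> g a y) * \<phi> g a * \<phi> (g \<otimes> a) y)"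
      by (simp add: linear mult_ac)
    also have "\<dots> = \<phi> g (a \<otimes> y) * u a y"
      using twist_coboundary_relation[OF that] by (simp add: u_def mult_ac)
    finally show ?thesis
      using twist_nonzero[of g "a \<otimes> y"] that by (simp add: H_closed)
  qed
  have u_right: "u x (b \<otimes> g) = u x b" if "x \<in> H" "b \<in> H" "g \<in> H" for x b g
  proof -
    have linear: "\<phi> (x \<otimes> b) g * s ((x \<otimes> b) \<otimes> g) (x, b \<otimes> g)
        = s (x \<otimes> b) (x, b) * (\<omega> x b g * \<phi> b g)"
      using right[of "x \<otimes> b" g "(x, b \<otimes> g)"] that by (simp add: H_closed sum_tw_mult sum_tw_right_act)
    have "\<phi> (x \<otimes> b) g * u x (b \<otimes> g)
        = \<phi> x (b \<otimes> g) * (\<phi> (x \<otimes> b) g * s ((x \<otimes> b) \<otimes> g) (x, b \<otimes> g))"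
      using that H_carrier by (simp add: u_def m_assoc mult_ac)
    also have "\<dots> = s (x \<otimes> b) (x, b) * (\<omega> x b g * (\<phi> b g * \<phi> x (b \<otimes> g)))"
      by (simp add: linear mult_ac)
    also have "\<dots> = \<phi> (x \<otimes> b) g * u x b"
      using twist_coboundary_relation[OF that] omega_nonzero[OF that] by (simp add: u_def field_simps)
    finally show ?thesis
      using twist_nonzero[of "x \<otimes> b" g] that by (simp add: H_closed)
  qed
  have u_const: "u a b = u \<one> \<one>" if "a \<in> H" "b \<in> H" for a b
    using u_left[of a \<one> \<one>] u_right[of \<one> \<one> b] u_left[of a \<one> b] that
      subgroup.one_closed[OF subgroup_H] H_carrier
    by simp
  have "1 = (\<Sum>a\<in>H. u a (inv a))"
    using unit[of \<one> \<one>] subgroup.one_closed[OF subgroup_H] H_carrier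
    by (simp add: sum_pairs_tw_mult u_def)
  also have "\<dots> = of_nat (card H) * u \<one> \<one>"
    using u_const by (simp add: H_closed)
  finally show ?thesis
    by auto
qed

lemma separable_iff_card_nonzero:
  "twisted_group_alg_separable G \<omega> H \<phi> \<longleftrightarrow> of_nat (card H) \<noteq> (0::'k)"
  using separable_if_card_nonzero card_nonzero_if_separable by blast

end

theorem lemma1p1p8:
  fixes G :: "('g, 'b) monoid_scheme"
    and \<omega> :: "'g \<Rightarrow> 'g \<Rightarrow> 'g \<Rightarrow> 'k::alg_closed_field"
    and H :: "'g set"
    and \<phi> :: "'g \<Rightarrow> 'g \<Rightarrow> 'k"
  assumes "CHAR('k) > 0"
    and "group G" and "finite (carrier G)"
    and "is_3cocycle G \<omega>"
    and "subgroup H G"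
    and "\<forall>a\<in>H. \<forall>b\<in>H. \<phi> a b \<noteq> 0"
    and "\<forall>a\<in>H. \<forall>b\<in>H. \<forall>c\<in>H. cobound2 G \<phi> a b c = inverse (\<omega> a b c)"
  shows "module_cat_M_separable G \<omega> H \<phi> \<longleftrightarrow> has_no_p_torsion G H CHAR('k)"
proof -
  have "finite H"
    using finite_subset[OF subgroup.subset[OF assms(5)] assms(3)] .
  interpret twisted_group_algebra G H \<omega> \<phi>
    by (intro twisted_group_algebra.intro[OF assms(2)] twisted_group_algebra_axioms.intro)
      (use assms(5-7) \<open>finite H\<close> in auto)
  have "module_cat_M_separable G \<omega> H \<phi> \<longleftrightarrow> of_nat (card H) \<noteq> (0::'k)"
    unfolding module_cat_M_separable_def by (rule separable_iff_card_nonzero)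
  also have "\<dots> \<longleftrightarrow> \<not> CHAR('k) dvd card H"
    by (simp add: of_nat_eq_0_iff_char_dvd)
  also have "\<dots> \<longleftrightarrow> has_no_p_torsion G H CHAR('k)"
    using no_p_torsion_iff_not_dvd_card[OF assms(5) \<open>finite H\<close> prime_CHAR_semidom[OF assms(1)]] ..
  finally show ?thesis .
qed

end
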